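(* Let $F_X,F_Y$ be univariate distributions. The set $\mathfrak{Q}^{F_X,F_Y}$ of bivariate quasi-distributions with margins $F_X,F_Y$ is closed under pointwise infima and suprema (of nonempty subsets). In particular, for every nonempty set $\mathcal{G}$ of bivariate distributions all having margins $F_X$ and $F_Y$, the pointwise infimum $\inf_{F\in\mathcal{G}}F$ and supremum $\sup_{F\in\mathcal{G}}F$ are quasi-distributions (with margins $F_X,F_Y$).
   Context: $\overline{\mathbb{R}}=\mathbb{R}\cup\{-\infty,\infty\}$. A univariate distribution is a nondecreasing $G:\overline{\mathbb{R}}\to[0,1]$ with $G(-\infty)=0$, $G(\infty)=1$ (not necessarily right continuous). The volume of $[x_1,x_2]\times[y_1,y_2]$ w.r.t. $F$ is $F(x_1,y_1)+F(x_2,y_2)-F(x_2,y_1)-F(x_1,y_2)$. A bivariate quasi-distribution is $F:\overline{\mathbb{R}}^2\to[0,1]$ with $F(x,-\infty)=F(-\infty,y)=0$, $F(\infty,\infty)=1$, and nonnegative volume for every rectangle with corners in $\overline{\mathbb{R}}^2$ intersecting the boundary (points having a coordinate $\pm\infty$); a bivariate distribution additionally has nonnegative volume for every rectangle. Margins are $F(\cdot,\infty)$ and $F(\infty,\cdot)$. *)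

theory Defs
  imports "HOL-Library.Extended_Real"
begin

text \<open>Univariate distribution on the extended reals (not necessarily right continuous).\<close>
definition univ_dist :: "(ereal \<Rightarrow> real) \<Rightarrow> bool" where
  "univ_dist G \<longleftrightarrow> mono G \<and> G (-\<infinity>) = 0 \<and> G \<infinity> = 1"

definition volume2 :: "(ereal \<Rightarrow> ereal \<Rightarrow> real) \<Rightarrow> ereal \<Rightarrow> ereal \<Rightarrow> ereal \<Rightarrow> ereal \<Rightarrow> real" where
  "volume2 F x1 x2 y1 y2 = F x1 y1 + F x2 y2 - F x2 y1 - F x1 y2"

definition meets_boundary :: "ereal \<Rightarrow> ereal \<Rightarrow> ereal \<Rightarrow> ereal \<Rightarrow> bool" where
  "meets_boundary x1 x2 y1 y2 \<longleftrightarrow> x1 = -\<infinity> \<or> x2 = \<infinity> \<or> y1 = -\<infinity> \<or> y2 = \<infinity>"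

definition biv_quasi_dist :: "(ereal \<Rightarrow> ereal \<Rightarrow> real) \<Rightarrow> bool" where
  "biv_quasi_dist F \<longleftrightarrow>
     (\<forall>x y. 0 \<le> F x y \<and> F x y \<le> 1) \<and>
     (\<forall>x. F x (-\<infinity>) = 0) \<and> (\<forall>y. F (-\<infinity>) y = 0) \<and> F \<infinity> \<infinity> = 1 \<and>
     (\<forall>x1 x2 y1 y2. x1 \<le> x2 \<and> y1 \<le> y2 \<and> meets_boundary x1 x2 y1 y2
        \<longrightarrow> volume2 F x1 x2 y1 y2 \<ge> 0)"

definition biv_dist :: "(ereal \<Rightarrow> ereal \<Rightarrow> real) \<Rightarrow> bool" where
  "biv_dist F \<longleftrightarrow> biv_quasi_dist F \<and>
     (\<forall>x1 x2 y1 y2. x1 \<le> x2 \<and> y1 \<le> y2 \<longrightarrow> volume2 F x1 x2 y1 y2 \<ge> 0)"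

definition has_margins :: "(ereal \<Rightarrow> ereal \<Rightarrow> real) \<Rightarrow> (ereal \<Rightarrow> real) \<Rightarrow> (ereal \<Rightarrow> real) \<Rightarrow> bool" where
  "has_margins F FX FY \<longleftrightarrow> (\<forall>x. F x \<infinity> = FX x) \<and> (\<forall>y. F \<infinity> y = FY y)"

definition quasi_dists_with_margins :: "(ereal \<Rightarrow> real) \<Rightarrow> (ereal \<Rightarrow> real) \<Rightarrow> (ereal \<Rightarrow> ereal \<Rightarrow> real) set" where
  "quasi_dists_with_margins FX FY = {F. biv_quasi_dist F \<and> has_margins F FX FY}"

end

theory Submission
  imports Defs
begin

text \<open>Once the lower edges vanish and the margins are prescribed, nonnegativity of the
  volumes of rectangles meeting the boundary amounts to four families of constraints of the
  form \<open>F p \<le> F q + c\<close> with \<open>c\<close> independent of \<open>F\<close>: monotonicity in each variable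
  (\<open>c = 0\<close>), and increments in \<open>y\<close> resp. \<open>x\<close> bounded by those of \<open>FY\<close> resp. \<open>FX\<close>.
  Constraints of this shape, pointwise equalities and the bounds \<open>0 \<le> F \<le> 1\<close> all survive
  pointwise infima and suprema over a nonempty family.\<close>

lemma cINF_le_cINF_add:
  fixes f g :: "'a \<Rightarrow> real"
  assumes "A \<noteq> {}" and "bdd_below (f ` A)" and "\<And>a. a \<in> A \<Longrightarrow> f a \<le> g a + c"
  shows "(INF a\<in>A. f a) \<le> (INF a\<in>A. g a) + c"
proof -
  have "(INF a\<in>A. f a) - c \<le> (INF a\<in>A. g a)"
  proof (rule cINF_greatest[OF \<open>A \<noteq> {}\<close>])
    fix a assume "a \<in> A"
    with assms(2,3) show "(INF a\<in>A. f a) - c \<le> g a"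
      using cINF_lower[of f A a] by fastforce
  qed
  then show ?thesis by simp
qed

lemma cSUP_le_cSUP_add:
  fixes f g :: "'a \<Rightarrow> real"
  assumes "A \<noteq> {}" and "bdd_above (g ` A)" and "\<And>a. a \<in> A \<Longrightarrow> f a \<le> g a + c"
  shows "(SUP a\<in>A. f a) \<le> (SUP a\<in>A. g a) + c"
proof (rule cSUP_least[OF \<open>A \<noteq> {}\<close>])
  fix a assume "a \<in> A"
  with assms(2,3) show "f a \<le> (SUP a\<in>A. g a) + c"
    using cSUP_upper[of a A g] by fastforce
qed

lemma boundary_volumes_nonneg_iff:
  assumes "\<forall>x. F x (-\<infinity>) = 0" and "\<forall>y. F (-\<infinity>) y = 0" and "has_margins F FX FY"
  shows "(\<forall>x1 x2 y1 y2. x1 \<le> x2 \<and> y1 \<le> y2 \<and> meets_boundary x1 x2 y1 y2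
            \<longrightarrow> volume2 F x1 x2 y1 y2 \<ge> 0) \<longleftrightarrow>
         (\<forall>x y1 y2. y1 \<le> y2 \<longrightarrow> F x y1 \<le> F x y2) \<and>
         (\<forall>x1 x2 y. x1 \<le> x2 \<longrightarrow> F x1 y \<le> F x2 y) \<and>
         (\<forall>x y1 y2. y1 \<le> y2 \<longrightarrow> F x y2 \<le> F x y1 + (FY y2 - FY y1)) \<and>
         (\<forall>x1 x2 y. x1 \<le> x2 \<longrightarrow> F x2 y \<le> F x1 y + (FX x2 - FX x1))"
  (is "?volumes \<longleftrightarrow> ?constraints")
proof
  assume ?volumes
  then show ?constraints
    using assms
    by (simp add: meets_boundary_def volume2_def has_margins_def)
      (smt (verit) ereal_less_eq(1,2))
next
  assume ?constraints
  then show ?volumes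
    using assms unfolding meets_boundary_def volume2_def has_margins_def
    by (smt (verit))
qed

lemma mem_quasi_dists_with_margins_iff:
  "F \<in> quasi_dists_with_margins FX FY \<longleftrightarrow>
     (\<forall>x y. 0 \<le> F x y \<and> F x y \<le> 1) \<and>
     (\<forall>x. F x (-\<infinity>) = 0) \<and> (\<forall>y. F (-\<infinity>) y = 0) \<and> F \<infinity> \<infinity> = 1 \<and>
     (\<forall>x. F x \<infinity> = FX x) \<and> (\<forall>y. F \<infinity> y = FY y) \<and>
     (\<forall>x y1 y2. y1 \<le> y2 \<longrightarrow> F x y1 \<le> F x y2) \<and>
     (\<forall>x1 x2 y. x1 \<le> x2 \<longrightarrow> F x1 y \<le> F x2 y) \<and>
     (\<forall>x y1 y2. y1 \<le> y2 \<longrightarrow> F x y2 \<le> F x y1 + (FY y2 - FY y1)) \<and>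
     (\<forall>x1 x2 y. x1 \<le> x2 \<longrightarrow> F x2 y \<le> F x1 y + (FX x2 - FX x1))"
  using boundary_volumes_nonneg_iff[of F FX FY]
  unfolding quasi_dists_with_margins_def biv_quasi_dist_def mem_Collect_eq
  by (auto simp: has_margins_def)

lemma INF_mem_quasi_dists_with_margins:
  assumes "\<G> \<noteq> {}" and "\<G> \<subseteq> quasi_dists_with_margins FX FY"
  shows "(\<lambda>x y. INF F\<in>\<G>. F x y) \<in> quasi_dists_with_margins FX FY"
proof -
  have member: "\<And>F. F \<in> \<G> \<Longrightarrow> F \<in> quasi_dists_with_margins FX FY"
    using assms(2) by blast
  have bdd: "bdd_below ((\<lambda>F. F x y) ` \<G>)" for x y
    using member by (intro bdd_belowI[of _ 0]) (auto simp: mem_quasi_dists_with_margins_iff)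
  have const: "(INF F\<in>\<G>. F x y) = c" if "\<And>F. F \<in> \<G> \<Longrightarrow> F x y = c" for x y c
  proof -
    have "(INF F\<in>\<G>. F x y) = (INF F\<in>\<G>. c)" using that by (intro INF_cong) auto
    then show ?thesis using \<open>\<G> \<noteq> {}\<close> by simp
  qed
  have le_add: "(INF F\<in>\<G>. F x y) \<le> (INF F\<in>\<G>. F x' y') + c"
    if "\<And>F. F \<in> \<G> \<Longrightarrow> F x y \<le> F x' y' + c" for x y x' y' c
    using cINF_le_cINF_add[OF \<open>\<G> \<noteq> {}\<close> bdd that] .
  obtain F0 where "F0 \<in> \<G>" using \<open>\<G> \<noteq> {}\<close> by blast
  have "0 \<le> (INF F\<in>\<G>. F x y)" for x y
    using member by (intro cINF_greatest[OF \<open>\<G> \<noteq> {}\<close>]) (auto simp: mem_quasi_dists_with_margins_iff)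
  moreover have "(INF F\<in>\<G>. F x y) \<le> 1" for x y
    using cINF_lower[OF bdd \<open>F0 \<in> \<G>\<close>, of x y] member[OF \<open>F0 \<in> \<G>\<close>]
    unfolding mem_quasi_dists_with_margins_iff by (meson order_trans)
  ultimately show ?thesis
    unfolding mem_quasi_dists_with_margins_iff
    by (intro conjI allI impI const le_add[where c = 0, simplified] le_add)
      (auto dest!: member simp: mem_quasi_dists_with_margins_iff)
qed

lemma SUP_mem_quasi_dists_with_margins:
  assumes "\<G> \<noteq> {}" and "\<G> \<subseteq> quasi_dists_with_margins FX FY"
  shows "(\<lambda>x y. SUP F\<in>\<G>. F x y) \<in> quasi_dists_with_margins FX FY"
proof -
  have member: "\<And>F. F \<in> \<G> \<Longrightarrow> F \<in> quasi_dists_with_margins FX FY"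
    using assms(2) by blast
  have bdd: "bdd_above ((\<lambda>F. F x y) ` \<G>)" for x y
    using member by (intro bdd_aboveI[of _ 1]) (auto simp: mem_quasi_dists_with_margins_iff)
  have const: "(SUP F\<in>\<G>. F x y) = c" if "\<And>F. F \<in> \<G> \<Longrightarrow> F x y = c" for x y c
  proof -
    have "(SUP F\<in>\<G>. F x y) = (SUP F\<in>\<G>. c)" using that by (intro SUP_cong) auto
    then show ?thesis using \<open>\<G> \<noteq> {}\<close> by simp
  qed
  have le_add: "(SUP F\<in>\<G>. F x y) \<le> (SUP F\<in>\<G>. F x' y') + c"
    if "\<And>F. F \<in> \<G> \<Longrightarrow> F x y \<le> F x' y' + c" for x y x' y' c
    using cSUP_le_cSUP_add[OF \<open>\<G> \<noteq> {}\<close> bdd that] .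
  obtain F0 where "F0 \<in> \<G>" using \<open>\<G> \<noteq> {}\<close> by blast
  have "(SUP F\<in>\<G>. F x y) \<le> 1" for x y
    using member by (intro cSUP_least[OF \<open>\<G> \<noteq> {}\<close>]) (auto simp: mem_quasi_dists_with_margins_iff)
  moreover have "0 \<le> (SUP F\<in>\<G>. F x y)" for x y
    using cSUP_upper[OF \<open>F0 \<in> \<G>\<close> bdd, of x y] member[OF \<open>F0 \<in> \<G>\<close>]
    unfolding mem_quasi_dists_with_margins_iff by (meson order_trans)
  ultimately show ?thesis
    unfolding mem_quasi_dists_with_margins_iff
    by (intro conjI allI impI const le_add[where c = 0, simplified] le_add)
      (auto dest!: member simp: mem_quasi_dists_with_margins_iff)
qed

theorem lemma13:
  fixes FX FY :: "ereal \<Rightarrow> real"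
  assumes "univ_dist FX" and "univ_dist FY"
  shows "(\<forall>\<G>. \<G> \<noteq> {} \<and> \<G> \<subseteq> quasi_dists_with_margins FX FY \<longrightarrow>
            (\<lambda>x y. INF F\<in>\<G>. F x y) \<in> quasi_dists_with_margins FX FY \<and>
            (\<lambda>x y. SUP F\<in>\<G>. F x y) \<in> quasi_dists_with_margins FX FY) \<and>
         (\<forall>\<G>. \<G> \<noteq> {} \<and> (\<forall>F\<in>\<G>. biv_dist F \<and> has_margins F FX FY) \<longrightarrow>
            biv_quasi_dist (\<lambda>x y. INF F\<in>\<G>. F x y) \<and>
            has_margins (\<lambda>x y. INF F\<in>\<G>. F x y) FX FY \<and>
            biv_quasi_dist (\<lambda>x y. SUP F\<in>\<G>. F x y) \<and>
            has_margins (\<lambda>x y. SUP F\<in>\<G>. F x y) FX FY)"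
proof (intro conjI allI impI; elim conjE)
  fix \<G> :: "(ereal \<Rightarrow> ereal \<Rightarrow> real) set"
  assume "\<G> \<noteq> {}" and "\<G> \<subseteq> quasi_dists_with_margins FX FY"
  then show "(\<lambda>x y. INF F\<in>\<G>. F x y) \<in> quasi_dists_with_margins FX FY"
    and "(\<lambda>x y. SUP F\<in>\<G>. F x y) \<in> quasi_dists_with_margins FX FY"
    by (rule INF_mem_quasi_dists_with_margins SUP_mem_quasi_dists_with_margins)+
next
  fix \<G> :: "(ereal \<Rightarrow> ereal \<Rightarrow> real) set"
  assume "\<G> \<noteq> {}" and "\<forall>F\<in>\<G>. biv_dist F \<and> has_margins F FX FY"
  then have "\<G> \<noteq> {}" and "\<G> \<subseteq> quasi_dists_with_margins FX FY"
    by (auto simp: quasi_dists_with_margins_def biv_dist_def)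
  from INF_mem_quasi_dists_with_margins[OF this] SUP_mem_quasi_dists_with_margins[OF this]
  show "biv_quasi_dist (\<lambda>x y. INF F\<in>\<G>. F x y)" and "has_margins (\<lambda>x y. INF F\<in>\<G>. F x y) FX FY"
    and "biv_quasi_dist (\<lambda>x y. SUP F\<in>\<G>. F x y)" and "has_margins (\<lambda>x y. SUP F\<in>\<G>. F x y) FX FY"
    by (simp_all add: quasi_dists_with_margins_def)
qed

end
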